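(* Let $g$ be a smooth metric of revolution on $S^2$, i.e. on the complement of two points (the poles) there are coordinates $(r,\phi)\in(0,R)\times\mathbb{R}/2\pi\mathbb{Z}$ with $g=\mathrm{d}r^2+a(r)^2\mathrm{d}\phi^2$ for a function $a:[0,R]\to[0,\infty)$ (positive on $(0,R)$, with $r=0$ and $r=R$ corresponding to the two poles), and assume that the Gaussian curvature $K$ of $g$ is non-constant. Let $\mu$ be the area form of $g$. Then $K$ does not induce a Hamiltonian circle action on $(S^2,\mu)$, i.e. there is no $T>0$ such that the time-$T$ map of the Hamiltonian flow of $K$ on $(S^2,\mu)$ is the identity.
   Context: The Hamiltonian flow of $K$ on $(S^2,\mu)$ is the flow of the vector field $X_K$ defined by $\mu(X_K,\cdot)=-\mathrm{d}K$. *)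

theory Defs
  imports "HOL-Analysis.Analysis"
begin

definition smooth1_on :: "real set \<Rightarrow> (real \<Rightarrow> real) \<Rightarrow> bool" where
  "smooth1_on U f \<longleftrightarrow>
     (\<exists>D :: nat \<Rightarrow> real \<Rightarrow> real. (\<forall>x\<in>U. D 0 x = f x) \<and>
        (\<forall>n. \<forall>x\<in>U. (D n has_real_derivative D (Suc n) x) (at x)))"

text \<open>C-infinity functions of two real variables on a set U (to be used with U open):
  D ds is the iterated partial derivative along the directions in the list ds
  (0 = first coordinate, 1 = second coordinate).\<close>
definition smooth2_on :: "(real \<times> real) set \<Rightarrow> (real \<times> real \<Rightarrow> real) \<Rightarrow> bool" where
  "smooth2_on U f \<longleftrightarrow>
     (\<exists>D :: nat list \<Rightarrow> real \<times> real \<Rightarrow> real. (\<forall>x\<in>U. D [] x = f x) \<and>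
        (\<forall>ds. \<forall>x\<in>U. (D ds has_derivative
            (\<lambda>h. fst h * D (0 # ds) x + snd h * D (1 # ds) x)) (at x)))"

text \<open>Components of the metric  d rho^2 + b(rho)^2 d phi^2  in the Cartesian chart
  (x,y) = (rho cos phi, rho sin phi) around a pole, on the punctured disc.\<close>
definition polar_g11 :: "(real \<Rightarrow> real) \<Rightarrow> real \<times> real \<Rightarrow> real" where
  "polar_g11 b p = (let x = fst p; y = snd p; \<rho> = norm p in
      x\<^sup>2 / \<rho>\<^sup>2 + (b \<rho>)\<^sup>2 * y\<^sup>2 / \<rho> ^ 4)"

definition polar_g12 :: "(real \<Rightarrow> real) \<Rightarrow> real \<times> real \<Rightarrow> real" where
  "polar_g12 b p = (let x = fst p; y = snd p; \<rho> = norm p in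
      x * y / \<rho>\<^sup>2 - (b \<rho>)\<^sup>2 * x * y / \<rho> ^ 4)"

definition polar_g22 :: "(real \<Rightarrow> real) \<Rightarrow> real \<times> real \<Rightarrow> real" where
  "polar_g22 b p = (let x = fst p; y = snd p; \<rho> = norm p in
      y\<^sup>2 / \<rho>\<^sup>2 + (b \<rho>)\<^sup>2 * x\<^sup>2 / \<rho> ^ 4)"

text \<open>The metric  d rho^2 + b(rho)^2 d phi^2  (rho = distance from the pole, valid for
  0 < rho < R) extends to a smooth Riemannian metric across the pole rho = 0, i.e. its
  components in the Cartesian chart around the pole extend smoothly and positive
  definitely to the origin.\<close>
definition pole_smooth :: "real \<Rightarrow> (real \<Rightarrow> real) \<Rightarrow> bool" where
  "pole_smooth R b \<longleftrightarrow>
     (\<exists>\<epsilon>>0. \<epsilon> \<le> R \<and> (\<exists>G11 G12 G22.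
        smooth2_on (ball 0 \<epsilon>) G11 \<and> smooth2_on (ball 0 \<epsilon>) G12 \<and> smooth2_on (ball 0 \<epsilon>) G22 \<and>
        (\<forall>p \<in> ball 0 \<epsilon> - {0}. G11 p = polar_g11 b p \<and> G12 p = polar_g12 b p \<and>
                              G22 p = polar_g22 b p) \<and>
        G11 0 > 0 \<and> G11 0 * G22 0 - (G12 0)\<^sup>2 > 0))"

text \<open>Gaussian curvature of  dr^2 + a(r)^2 dphi^2  at radius r.\<close>
definition gauss_curv :: "(real \<Rightarrow> real) \<Rightarrow> real \<Rightarrow> real" where
  "gauss_curv a r = - deriv (deriv a) r / a r"

text \<open>The complement of the poles, in coordinates (r, phi) with phi in R (to be read mod 2 pi).\<close>
definition mid_region :: "real \<Rightarrow> (real \<times> real) set" where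
  "mid_region R = {0<..<R} \<times> UNIV"

text \<open>Area form mu = a(r) dr wedge dphi, evaluated on tangent vectors v, w at p = (r, phi).\<close>
definition area_form :: "(real \<Rightarrow> real) \<Rightarrow> real \<times> real \<Rightarrow> real \<times> real \<Rightarrow> real \<times> real \<Rightarrow> real" where
  "area_form a p v w = a (fst p) * (fst v * snd w - snd v * fst w)"

definition is_hamiltonian_vf ::
  "(real \<times> real \<Rightarrow> real \<times> real \<Rightarrow> real \<times> real \<Rightarrow> real) \<Rightarrow> (real \<times> real) set
    \<Rightarrow> (real \<times> real \<Rightarrow> real) \<Rightarrow> (real \<times> real \<Rightarrow> real \<times> real) \<Rightarrow> bool" where
  "is_hamiltonian_vf \<mu> U H X \<longleftrightarrow>
     (\<forall>p\<in>U. \<exists>dH. (H has_derivative dH) (at p) \<and> (\<forall>w. \<mu> p (X p) w = - dH w))"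

text \<open>The time-T map of the Hamiltonian flow of the curvature K on (S^2, mu) is the identity
  (checked on the complement of the poles, in (r, phi) coordinates, phi mod 2 pi):
  every point p has a flow line on [0,T] starting at p and returning to p at time T.\<close>
definition time_map_identity :: "(real \<Rightarrow> real) \<Rightarrow> real \<Rightarrow> real \<Rightarrow> bool" where
  "time_map_identity a R T \<longleftrightarrow>
     (\<exists>X. is_hamiltonian_vf (area_form a) (mid_region R) (\<lambda>p. gauss_curv a (fst p)) X \<and>
        (\<forall>p \<in> mid_region R. \<exists>\<gamma> :: real \<Rightarrow> real \<times> real.
            \<gamma> 0 = p \<and>
            (\<forall>t\<in>{0..T}. \<gamma> t \<in> mid_region R \<and>
                 (\<gamma> has_vector_derivative X (\<gamma> t)) (at t within {0..T})) \<and>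
            fst (\<gamma> T) = fst p \<and> (\<exists>k::int. snd (\<gamma> T) = snd p + 2 * pi * of_int k)))"

end

theory Submission
  imports Defs
begin

(* The Hamiltonian vector field of K = K(r) for mu = a dr dphi is (0, K'(r)/a(r)), so its flow
   rotates each parallel r = const with angular speed K'/a. If the time-T map is the identity,
   T K'/a takes values in 2 pi Z, hence is constant by continuity: K' = c a. Together with
   a'' = -K a this system has two first integrals, c a' + K^2/2 and c^2 a^2/2 + K^3/6 - C1 K,
   and eliminating K gives a polynomial relation between a and a'. Smoothness at the poles forces
   a -> 0 with a' -> 1 at r = 0 and a' -> -1 at r = R; comparing the relation at both poles
   gives c^3 = 0, so K is constant. *)

lemma smooth1_on_has_derivative:
  assumes "smooth1_on U f" "open U"
  obtains f' where "smooth1_on U f'" "\<And>x. x \<in> U \<Longrightarrow> (f has_real_derivative f' x) (at x)"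
proof -
  obtain D :: "nat \<Rightarrow> real \<Rightarrow> real" where D0: "\<forall>x\<in>U. D 0 x = f x"
    and D: "\<forall>n. \<forall>x\<in>U. (D n has_real_derivative D (Suc n) x) (at x)"
    using assms(1) unfolding smooth1_on_def by blast
  show thesis
  proof
    show "smooth1_on U (D 1)"
      unfolding smooth1_on_def by (rule exI[of _ "\<lambda>n. D (Suc n)"]) (use D in auto)
    show "(f has_real_derivative D 1 x) (at x)" if "x \<in> U" for x
      using has_field_derivative_transform_within_open[OF D[rule_format, OF that, of 0] assms(2) that, where g=f]
        D0 by simp
  qed
qed

lemma smooth1_on_continuous_on:
  assumes "smooth1_on U f" "open U"
  shows "continuous_on U f"
  using smooth1_on_has_derivative[OF assms]
  by (metis DERIV_isCont continuous_at_imp_continuous_on)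

lemma smooth_profile_gauss_curv:
  assumes "smooth1_on U a" "open U" and a_nz: "\<And>x. x \<in> U \<Longrightarrow> a x \<noteq> 0"
  obtains a' K' where "\<And>x. x \<in> U \<Longrightarrow> (a has_real_derivative a' x) (at x)"
    "\<And>x. x \<in> U \<Longrightarrow> (a' has_real_derivative - gauss_curv a x * a x) (at x)"
    "\<And>x. x \<in> U \<Longrightarrow> (gauss_curv a has_real_derivative K' x) (at x)"
    "continuous_on U K'"
proof -
  obtain a1 where a1: "smooth1_on U a1" "\<And>x. x \<in> U \<Longrightarrow> (a has_real_derivative a1 x) (at x)"
    using smooth1_on_has_derivative[OF assms(1,2)] by blast
  obtain a2 where a2: "smooth1_on U a2" "\<And>x. x \<in> U \<Longrightarrow> (a1 has_real_derivative a2 x) (at x)"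
    using smooth1_on_has_derivative[OF a1(1) assms(2)] by blast
  obtain a3 where a3: "smooth1_on U a3" "\<And>x. x \<in> U \<Longrightarrow> (a2 has_real_derivative a3 x) (at x)"
    using smooth1_on_has_derivative[OF a2(1) assms(2)] by blast
  have "deriv (deriv a) x = a2 x" if "x \<in> U" for x
  proof (rule DERIV_imp_deriv)
    show "(deriv a has_real_derivative a2 x) (at x)"
      by (rule has_field_derivative_transform_within_open[OF a2(2)[OF that] assms(2) that])
         (use a1(2) DERIV_imp_deriv in metis)
  qed
  then have K_eq: "gauss_curv a x = - a2 x / a x" if "x \<in> U" for x
    using that by (simp add: gauss_curv_def)
  show thesis
  proof
    show "(a has_real_derivative a1 x) (at x)" if "x \<in> U" for x
      using a1(2)[OF that] .
    show "(a1 has_real_derivative - gauss_curv a x * a x) (at x)" if "x \<in> U" for x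
      using a2(2)[OF that] K_eq[OF that] a_nz[OF that] by simp
    show "(gauss_curv a has_real_derivative - (a3 x * a x - a2 x * a1 x) / (a x)\<^sup>2) (at x)"
      if "x \<in> U" for x
    proof (rule has_field_derivative_transform_within_open[OF _ assms(2) that])
      show "((\<lambda>x. - a2 x / a x) has_real_derivative - (a3 x * a x - a2 x * a1 x) / (a x)\<^sup>2) (at x)"
        using a3(2)[OF that] a1(2)[OF that] a_nz[OF that]
        by (auto intro!: derivative_eq_intros simp: field_simps power2_eq_square)
    qed (use K_eq in simp)
    show "continuous_on U (\<lambda>x. - (a3 x * a x - a2 x * a1 x) / (a x)\<^sup>2)"
      using a_nz by (intro continuous_intros smooth1_on_continuous_on[OF _ assms(2)] assms(1) a1(1)
          a2(1) a3(1)) auto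
  qed
qed

lemma smooth2_on_restrict_first_axis:
  assumes "smooth2_on U f"
  shows "smooth1_on {t. (t, 0) \<in> U} (\<lambda>t. f (t, 0))"
proof -
  obtain D :: "nat list \<Rightarrow> real \<times> real \<Rightarrow> real" where D0: "\<forall>x\<in>U. D [] x = f x"
    and D: "\<forall>ds. \<forall>x\<in>U. (D ds has_derivative
            (\<lambda>h. fst h * D (0 # ds) x + snd h * D (1 # ds) x)) (at x)"
    using assms unfolding smooth2_on_def by blast
  have "((\<lambda>t. D (replicate n 0) (t, 0)) has_real_derivative D (replicate (Suc n) 0) (t, 0)) (at t)"
    if "(t, 0) \<in> U" for n t
  proof -
    have "((\<lambda>s::real. (s, 0::real)) has_derivative (\<lambda>s. (s, 0))) (at t)"
      by (auto intro!: derivative_eq_intros)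
    from diff_chain_at[OF this D[rule_format, OF that, of "replicate n 0"]]
    show ?thesis by (simp add: o_def has_field_derivative_def mult_commute_abs)
  qed
  then show ?thesis
    unfolding smooth1_on_def using D0
    by (intro exI[of _ "\<lambda>n t. D (replicate n 0) (t, 0)"]) auto
qed

lemma smooth2_on_isCont:
  assumes "smooth2_on U f" "open U" "x \<in> U"
  shows "isCont f x"
proof -
  obtain D :: "nat list \<Rightarrow> real \<times> real \<Rightarrow> real" where D0: "\<forall>x\<in>U. D [] x = f x"
    and D: "\<forall>ds. \<forall>x\<in>U. (D ds has_derivative
            (\<lambda>h. fst h * D (0 # ds) x + snd h * D (1 # ds) x)) (at x)"
    using assms(1) unfolding smooth2_on_def by blast
  have "(f has_derivative (\<lambda>h. fst h * D [0] x + snd h * D [1] x)) (at x)"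
    using has_derivative_transform_within_open[OF D[rule_format, OF assms(3), of "[]"] assms(2,3), where g=f]
      D0 by simp
  then show ?thesis by (rule has_derivative_continuous)
qed

lemma radial_profile_tendsto_at_pole:
  fixes b b' h h' :: "real \<Rightarrow> real"
  assumes "\<epsilon> > 0"
    and b_pos: "\<And>\<rho>. \<rho> \<in> {0<..<\<epsilon>} \<Longrightarrow> b \<rho> > 0"
    and b_sq: "\<And>\<rho>. \<rho> \<in> {0<..<\<epsilon>} \<Longrightarrow> (b \<rho>)\<^sup>2 = \<rho>\<^sup>2 * h \<rho>"
    and b_deriv: "\<And>\<rho>. \<rho> \<in> {0<..<\<epsilon>} \<Longrightarrow> (b has_real_derivative b' \<rho>) (at \<rho>)"
    and h_deriv: "\<And>\<rho>. \<rho> \<in> {0<..<\<epsilon>} \<Longrightarrow> (h has_real_derivative h' \<rho>) (at \<rho>)"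
    and h_lim: "(h \<longlongrightarrow> 1) (at_right 0)" and h'_lim: "(h' \<longlongrightarrow> l) (at_right 0)"
  shows "(b \<longlongrightarrow> 0) (at_right 0)" "(b' \<longlongrightarrow> 1) (at_right 0)"
proof -
  have h_pos: "h \<rho> > 0" if "\<rho> \<in> {0<..<\<epsilon>}" for \<rho>
    using b_sq[OF that] b_pos[OF that] that
    by (metis greaterThanLessThan_iff power2_less_0 zero_less_mult_pos zero_less_power2 less_irrefl)
  have b_eq: "b \<rho> = \<rho> * sqrt (h \<rho>)" if "\<rho> \<in> {0<..<\<epsilon>}" for \<rho>
    using b_sq[OF that] b_pos[OF that] that
    by (metis greaterThanLessThan_iff less_eq_real_def real_sqrt_abs real_sqrt_mult abs_of_pos)
  have b'_eq: "b' \<rho> = sqrt (h \<rho>) + \<rho> * h' \<rho> / (2 * sqrt (h \<rho>))" if \<rho>: "\<rho> \<in> {0<..<\<epsilon>}" for \<rho>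
  proof (rule DERIV_unique[OF b_deriv[OF \<rho>]])
    have "((\<lambda>t. t * sqrt (h t)) has_real_derivative sqrt (h \<rho>) + \<rho> * h' \<rho> / (2 * sqrt (h \<rho>))) (at \<rho>)"
      using h_deriv[OF \<rho>] h_pos[OF \<rho>] by (auto intro!: derivative_eq_intros simp: field_simps)
    then show "(b has_real_derivative sqrt (h \<rho>) + \<rho> * h' \<rho> / (2 * sqrt (h \<rho>))) (at \<rho>)"
      by (rule has_field_derivative_transform_within_open[where S="{0<..<\<epsilon>}"]) (use \<rho> b_eq in auto)
  qed
  have near: "eventually (\<lambda>\<rho>. \<rho> \<in> {0<..<\<epsilon>}) (at_right 0)"
    using \<open>\<epsilon> > 0\<close> eventually_at_right_field by (auto intro: exI[of _ \<epsilon>])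
  have "((\<lambda>\<rho>. \<rho> * sqrt (h \<rho>)) \<longlongrightarrow> 0 * sqrt 1) (at_right 0)"
    by (intro tendsto_intros h_lim)
  moreover have "eventually (\<lambda>\<rho>. \<rho> * sqrt (h \<rho>) = b \<rho>) (at_right 0)"
    using near by eventually_elim (use b_eq in auto)
  ultimately show "(b \<longlongrightarrow> 0) (at_right 0)"
    using tendsto_cong by fastforce
  have "((\<lambda>\<rho>. sqrt (h \<rho>) + \<rho> * h' \<rho> / (2 * sqrt (h \<rho>))) \<longlongrightarrow> sqrt 1 + 0 * l / (2 * sqrt 1)) (at_right 0)"
    by (intro tendsto_intros h_lim h'_lim) auto
  moreover have "eventually (\<lambda>\<rho>. sqrt (h \<rho>) + \<rho> * h' \<rho> / (2 * sqrt (h \<rho>)) = b' \<rho>) (at_right 0)"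
    using near by eventually_elim (use b'_eq in auto)
  ultimately show "(b' \<longlongrightarrow> 1) (at_right 0)"
    using tendsto_cong by fastforce
qed

lemma pole_smooth_radial_factor:
  assumes "pole_smooth R b"
  obtains \<epsilon> h where "\<epsilon> > 0" "\<epsilon> \<le> R" "smooth1_on (ball 0 \<epsilon>) h" "h 0 = 1"
    "\<And>\<rho>. \<rho> \<in> {0<..<\<epsilon>} \<Longrightarrow> (b \<rho>)\<^sup>2 = \<rho>\<^sup>2 * h \<rho>"
proof -
  obtain \<epsilon> G where "\<epsilon> > 0" "\<epsilon> \<le> R" and G_smooth: "smooth2_on (ball 0 \<epsilon>) G"
    and G_eq: "\<And>p. p \<in> ball 0 \<epsilon> - {0} \<Longrightarrow> G p = polar_g22 b p"
    using assms unfolding pole_smooth_def by blast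
  (* On the two axes g22 equals b(rho)^2/rho^2 and 1 respectively. *)
  have on_axes: "(t, 0) \<in> ball 0 \<epsilon> \<longleftrightarrow> t \<in> ball 0 \<epsilon>" "(0, t) \<in> ball 0 \<epsilon> \<longleftrightarrow> t \<in> ball 0 \<epsilon>"
    for t :: real
    by (simp_all add: zero_prod_def dist_Pair_Pair)
  have G_0: "G 0 = 1"
  proof (rule tendsto_unique[OF trivial_limit_at_right_real])
    show "((\<lambda>t. G (0, t)) \<longlongrightarrow> G 0) (at_right 0)"
      using smooth2_on_isCont[OF G_smooth] \<open>\<epsilon> > 0\<close>
      by (intro isCont_tendsto_compose[where g=G]) (auto intro!: tendsto_eq_intros simp: zero_prod_def)
    have "eventually (\<lambda>t. t \<in> {0<..<\<epsilon>}) (at_right (0::real))"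
      using \<open>\<epsilon> > 0\<close> eventually_at_right_field by (auto intro: exI[of _ \<epsilon>])
    then have "eventually (\<lambda>t. G (0, t) = 1) (at_right 0)"
    proof (rule eventually_mono)
      fix t :: real assume t: "t \<in> {0<..<\<epsilon>}"
      then have "(0, t) \<in> ball 0 \<epsilon> - {0}"
        using on_axes(2)[of t] by (auto simp: zero_prod_def)
      then have "G (0, t) = polar_g22 b (0, t)"
        by (rule G_eq)
      then show "G (0, t) = 1"
        using t by (simp add: polar_g22_def norm_Pair)
    qed
    then show "((\<lambda>t. G (0, t)) \<longlongrightarrow> 1) (at_right 0)"
      by (rule tendsto_eventually)
  qed
  show thesis
  proof
    show "smooth1_on (ball 0 \<epsilon>) (\<lambda>t. G (t, 0))"
      using smooth2_on_restrict_first_axis[OF G_smooth] unfolding on_axes(1) Collect_mem_eq .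
    show "G (0, 0) = 1"
      using G_0 by (simp add: zero_prod_def)
    show "(b \<rho>)\<^sup>2 = \<rho>\<^sup>2 * G (\<rho>, 0)" if "\<rho> \<in> {0<..<\<epsilon>}" for \<rho>
    proof -
      have "(\<rho>, 0) \<in> ball 0 \<epsilon> - {0}"
        using on_axes(1)[of \<rho>] that by (auto simp: zero_prod_def)
      from G_eq[OF this] that show ?thesis
        by (auto simp: polar_g22_def norm_Pair field_simps power4_eq_xxxx power2_eq_square)
    qed
  qed fact+
qed

lemma pole_smooth_tendsto:
  assumes "pole_smooth R b"
    and b_pos: "\<And>s. s \<in> {0<..<R} \<Longrightarrow> b s > 0"
    and b_deriv: "\<And>s. s \<in> {0<..<R} \<Longrightarrow> (b has_real_derivative b' s) (at s)"
  shows "(b \<longlongrightarrow> 0) (at_right 0)" "(b' \<longlongrightarrow> 1) (at_right 0)"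
proof -
  obtain \<epsilon> h where "\<epsilon> > 0" "\<epsilon> \<le> R" and h_smooth: "smooth1_on (ball 0 \<epsilon>) h" and "h 0 = 1"
    and b_sq: "\<And>\<rho>. \<rho> \<in> {0<..<\<epsilon>} \<Longrightarrow> (b \<rho>)\<^sup>2 = \<rho>\<^sup>2 * h \<rho>"
    using pole_smooth_radial_factor[OF assms(1)] by blast
  obtain h' where h'_smooth: "smooth1_on (ball 0 \<epsilon>) h'"
    and h_deriv: "\<And>t. t \<in> ball 0 \<epsilon> \<Longrightarrow> (h has_real_derivative h' t) (at t)"
    using smooth1_on_has_derivative[OF h_smooth open_ball] by blast
  have right_limit: "(f \<longlongrightarrow> f 0) (at_right 0)" if "smooth1_on (ball 0 \<epsilon>) f" for f
    using smooth1_on_continuous_on[OF that open_ball] \<open>\<epsilon> > 0\<close>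
    by (simp add: continuous_on_eq_continuous_at isCont_def filterlim_at_split)
  show "(b \<longlongrightarrow> 0) (at_right 0)" "(b' \<longlongrightarrow> 1) (at_right 0)"
    using radial_profile_tendsto_at_pole[OF \<open>\<epsilon> > 0\<close> _ b_sq, of b' h']
      right_limit[OF h_smooth] right_limit[OF h'_smooth] \<open>h 0 = 1\<close> b_pos b_deriv h_deriv \<open>\<epsilon> \<le> R\<close>
    by auto
qed

lemma tendsto_at_left_iff_reflect:
  fixes f :: "real \<Rightarrow> 'a::topological_space"
  shows "(f \<longlongrightarrow> l) (at_left R) \<longleftrightarrow> ((\<lambda>s. f (R - s)) \<longlongrightarrow> l) (at_right 0)"
  unfolding filterlim_at_left_to_right filterlim_at_right_to_0[of _ _ "- R"] by simp

lemma pole_smooth_reflected_tendsto: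
  assumes "pole_smooth R (\<lambda>s. a (R - s))"
    and a_pos: "\<And>r. r \<in> {0<..<R} \<Longrightarrow> a r > 0"
    and a_deriv: "\<And>r. r \<in> {0<..<R} \<Longrightarrow> (a has_real_derivative a' r) (at r)"
  shows "(a \<longlongrightarrow> 0) (at_left R)" "(a' \<longlongrightarrow> - 1) (at_left R)"
proof -
  have "((\<lambda>s. a (R - s)) has_real_derivative - a' (R - s)) (at s)" if "s \<in> {0<..<R}" for s
  proof -
    have outer: "(a has_real_derivative a' (R - s)) (at (R - s))"
      using a_deriv that by simp
    have inner: "((\<lambda>s. R - s) has_real_derivative - 1) (at s)"
      by (auto intro!: derivative_eq_intros)
    from DERIV_chain2[where f=a and g="\<lambda>s. R - s" and x=s, OF outer inner] show ?thesis
      by simp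
  qed
  from pole_smooth_tendsto[OF assms(1) _ this] a_pos
  have "((\<lambda>s. a (R - s)) \<longlongrightarrow> 0) (at_right 0)" "((\<lambda>s. - a' (R - s)) \<longlongrightarrow> 1) (at_right 0)"
    by auto
  then show "(a \<longlongrightarrow> 0) (at_left R)" "(a' \<longlongrightarrow> - 1) (at_left R)"
    unfolding tendsto_at_left_iff_reflect by (simp_all add: tendsto_minus_cancel_left)
qed

lemma curvature_gradient_proportional_first_integral:
  fixes a a' K :: "real \<Rightarrow> real"
  assumes "convex I"
    and a_deriv: "\<And>x. x \<in> I \<Longrightarrow> (a has_real_derivative a' x) (at x)"
    and a'_deriv: "\<And>x. x \<in> I \<Longrightarrow> (a' has_real_derivative - K x * a x) (at x)"
    and K_deriv: "\<And>x. x \<in> I \<Longrightarrow> (K has_real_derivative c * a x) (at x)"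
  obtains C1 C2 where
    "\<And>x. x \<in> I \<Longrightarrow> 2 * (C1 - c * a' x) * (2 * C1 + c * a' x)\<^sup>2 = 9 * (c\<^sup>2 * (a x)\<^sup>2 / 2 - C2)\<^sup>2"
proof -
  have "\<exists>C1. \<forall>x\<in>I. c * a' x + (K x)\<^sup>2 / 2 = C1"
  proof (rule has_field_derivative_zero_constant[OF \<open>convex I\<close>])
    fix x assume x: "x \<in> I"
    have "((\<lambda>x. c * a' x + (K x)\<^sup>2 / 2) has_real_derivative c * (- K x * a x) + K x * (c * a x)) (at x)"
      using a'_deriv[OF x] K_deriv[OF x] by (auto intro!: derivative_eq_intros)
    then show "((\<lambda>x. c * a' x + (K x)\<^sup>2 / 2) has_real_derivative 0) (at x within I)"
      by (simp add: has_field_derivative_at_within)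
  qed
  then obtain C1 where C1: "\<And>x. x \<in> I \<Longrightarrow> (K x)\<^sup>2 = 2 * (C1 - c * a' x)"
    by (fastforce simp: field_simps)
  have "\<exists>C2. \<forall>x\<in>I. c\<^sup>2 * (a x)\<^sup>2 / 2 + (K x) ^ 3 / 6 - C1 * K x = C2"
  proof (rule has_field_derivative_zero_constant[OF \<open>convex I\<close>])
    fix x assume x: "x \<in> I"
    have "((\<lambda>x. c\<^sup>2 * (a x)\<^sup>2 / 2 + (K x) ^ 3 / 6 - C1 * K x) has_real_derivative
            c\<^sup>2 * a x * a' x + c * a x * ((K x)\<^sup>2 / 2 - C1)) (at x)"
      using a_deriv[OF x] K_deriv[OF x]
      by (auto intro!: derivative_eq_intros simp: field_simps power2_eq_square)
    also have "c\<^sup>2 * a x * a' x + c * a x * ((K x)\<^sup>2 / 2 - C1) = 0"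
      unfolding C1[OF x] by (simp add: field_simps power2_eq_square)
    finally show "((\<lambda>x. c\<^sup>2 * (a x)\<^sup>2 / 2 + (K x) ^ 3 / 6 - C1 * K x) has_real_derivative 0) (at x within I)"
      by (simp add: has_field_derivative_at_within)
  qed
  then obtain C2 where C2: "\<And>x. x \<in> I \<Longrightarrow> c\<^sup>2 * (a x)\<^sup>2 / 2 + (K x) ^ 3 / 6 - C1 * K x = C2"
    by blast
  show thesis
  proof
    fix x assume x: "x \<in> I"
    have "(K x) ^ 3 = K x * (2 * (C1 - c * a' x))"
      by (metis C1[OF x] power2_eq_square power3_eq_cube mult.assoc)
    with C2[OF x] have K_eq: "K x * (2 * C1 + c * a' x) = 3 * (c\<^sup>2 * (a x)\<^sup>2 / 2 - C2)"
      by (simp add: field_simps)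
    have "2 * (C1 - c * a' x) * (2 * C1 + c * a' x)\<^sup>2 = (K x * (2 * C1 + c * a' x))\<^sup>2"
      by (simp add: power_mult_distrib C1[OF x])
    also have "\<dots> = 9 * (c\<^sup>2 * (a x)\<^sup>2 / 2 - C2)\<^sup>2"
      unfolding K_eq power_mult_distrib by simp
    finally show "2 * (C1 - c * a' x) * (2 * C1 + c * a' x)\<^sup>2 = 9 * (c\<^sup>2 * (a x)\<^sup>2 / 2 - C2)\<^sup>2" .
  qed
qed

lemma curvature_gradient_proportional_imp_zero:
  fixes a a' K :: "real \<Rightarrow> real"
  assumes "R > 0"
    and a_deriv: "\<And>x. x \<in> {0<..<R} \<Longrightarrow> (a has_real_derivative a' x) (at x)"
    and a'_deriv: "\<And>x. x \<in> {0<..<R} \<Longrightarrow> (a' has_real_derivative - K x * a x) (at x)"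
    and K_deriv: "\<And>x. x \<in> {0<..<R} \<Longrightarrow> (K has_real_derivative c * a x) (at x)"
    and "(a \<longlongrightarrow> 0) (at_right 0)" "(a' \<longlongrightarrow> 1) (at_right 0)"
    and "(a \<longlongrightarrow> 0) (at_left R)" "(a' \<longlongrightarrow> - 1) (at_left R)"
  shows "c = 0"
proof -
  obtain C1 C2 where first_integral: "\<And>x. x \<in> {0<..<R} \<Longrightarrow>
      2 * (C1 - c * a' x) * (2 * C1 + c * a' x)\<^sup>2 = 9 * (c\<^sup>2 * (a x)\<^sup>2 / 2 - C2)\<^sup>2"
    using curvature_gradient_proportional_first_integral[of "{0<..<R}" a a' K c] assms(2-4) by auto
  define P where "P u v = 2 * (C1 - c * v) * (2 * C1 + c * v)\<^sup>2 - 9 * (c\<^sup>2 * u\<^sup>2 / 2 - C2)\<^sup>2" for u v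
  have P_limit: "P u v = 0"
    if "(a \<longlongrightarrow> u) F" "(a' \<longlongrightarrow> v) F" "eventually (\<lambda>x. x \<in> {0<..<R}) F" "F \<noteq> bot"
    for F u v
  proof (rule tendsto_unique[OF \<open>F \<noteq> bot\<close>])
    show "((\<lambda>x. P (a x) (a' x)) \<longlongrightarrow> P u v) F"
      unfolding P_def by (auto intro!: tendsto_intros that)
    have "eventually (\<lambda>x. P (a x) (a' x) = 0) F"
      by (rule eventually_mono[OF that(3)]) (use first_integral in \<open>simp add: P_def\<close>)
    then show "((\<lambda>x. P (a x) (a' x)) \<longlongrightarrow> 0) F"
      by (rule tendsto_eventually)
  qed
  have "eventually (\<lambda>x. x \<in> {0<..<R}) (at_right 0)"
    using \<open>R > 0\<close> eventually_at_right_field by (auto intro: exI[of _ R])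
  with assms(5,6) have at_0: "P 0 1 = 0"
    by (intro P_limit) auto
  have "eventually (\<lambda>x. x \<in> {0<..<R}) (at_left R)"
    using \<open>R > 0\<close> eventually_at_left_field by (auto intro: exI[of _ 0])
  with assms(7,8) have at_R: "P 0 (- 1) = 0"
    by (intro P_limit) auto
  have "P 0 1 - P 0 (- 1) = - 4 * c ^ 3"
    unfolding P_def by (simp add: algebra_simps power2_eq_square power3_eq_cube)
  then show "c = 0"
    using at_0 at_R by simp
qed

lemma hamiltonian_vf_of_radial_function:
  assumes "is_hamiltonian_vf (area_form a) (mid_region R) (\<lambda>p. K (fst p)) X"
    and "fst p \<in> {0<..<R}" "a (fst p) \<noteq> 0"
    and K_deriv: "(K has_real_derivative K' (fst p)) (at (fst p))"
  shows "X p = (0, K' (fst p) / a (fst p))"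
proof -
  have "p \<in> mid_region R"
    using assms(2) by (cases p) (simp add: mid_region_def)
  then obtain dH where dH: "((\<lambda>p. K (fst p)) has_derivative dH) (at p)"
      and X_dH: "\<And>w. area_form a p (X p) w = - dH w"
    using assms(1) unfolding is_hamiltonian_vf_def by blast
  have "((\<lambda>q. K (fst q)) has_derivative (\<lambda>w. K' (fst p) * fst w)) (at p)"
    using diff_chain_at[OF has_derivative_fst[OF has_derivative_ident]
        K_deriv[unfolded has_field_derivative_def]]
    by (simp add: o_def)
  then have "dH = (\<lambda>w. K' (fst p) * fst w)"
    using dH has_derivative_unique by blast
  then have "a (fst p) * fst (X p) = 0" "a (fst p) * snd (X p) = K' (fst p)"
    using X_dH[of "(0, 1)"] X_dH[of "(1, 0)"] by (simp_all add: area_form_def)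
  then show ?thesis
    using assms(3) by (simp add: prod_eq_iff field_simps)
qed

lemma has_vector_derivative_fst:
  "(f has_vector_derivative f') F \<Longrightarrow> ((\<lambda>t. fst (f t)) has_vector_derivative fst f') F"
  unfolding has_vector_derivative_def by (drule has_derivative_fst) simp

lemma has_vector_derivative_snd:
  "(f has_vector_derivative f') F \<Longrightarrow> ((\<lambda>t. snd (f t)) has_vector_derivative snd f') F"
  unfolding has_vector_derivative_def by (drule has_derivative_snd) simp

lemma flow_of_rotation_field:
  fixes \<gamma> :: "real \<Rightarrow> real \<times> real"
  assumes "T \<ge> 0"
    and X: "\<And>q. q \<in> S \<Longrightarrow> X q = (0, \<omega> (fst q))"
    and \<gamma>: "\<And>t. t \<in> {0..T} \<Longrightarrow> \<gamma> t \<in> S \<and> (\<gamma> has_vector_derivative X (\<gamma> t)) (at t within {0..T})"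
  shows "\<gamma> T = (fst (\<gamma> 0), snd (\<gamma> 0) + T * \<omega> (fst (\<gamma> 0)))"
proof -
  have \<gamma>_deriv: "(\<gamma> has_vector_derivative (0, \<omega> (fst (\<gamma> t)))) (at t within {0..T})" if "t \<in> {0..T}" for t
    using \<gamma>[OF that] X[of "\<gamma> t"] by simp
  obtain r where r: "\<And>t. t \<in> {0..T} \<Longrightarrow> fst (\<gamma> t) = r"
    using has_vector_derivative_zero_constant[of "{0..T}" "\<lambda>t. fst (\<gamma> t)"]
      has_vector_derivative_fst[OF \<gamma>_deriv] by auto
  have "((\<lambda>t. snd (\<gamma> t) - t * \<omega> r) has_vector_derivative 0) (at t within {0..T})" if "t \<in> {0..T}" for t
  proof -
    have "((\<lambda>t. snd (\<gamma> t) - t * \<omega> r) has_vector_derivative \<omega> r - 1 * \<omega> r) (at t within {0..T})"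
      using has_vector_derivative_snd[OF \<gamma>_deriv[OF that]] r[OF that]
      by (intro derivative_intros) auto
    then show ?thesis by simp
  qed
  then obtain c where "\<And>t. t \<in> {0..T} \<Longrightarrow> snd (\<gamma> t) - t * \<omega> r = c"
    using has_vector_derivative_zero_constant[of "{0..T}" "\<lambda>t. snd (\<gamma> t) - t * \<omega> r"] by auto
  from this[of 0] this[of T] r[of 0] r[of T] \<open>T \<ge> 0\<close> show ?thesis
    by (simp add: prod_eq_iff)
qed

lemma continuous_on_Ints_valued_constant:
  fixes f :: "'a::topological_space \<Rightarrow> real"
  assumes "connected S" "continuous_on S f" "\<And>x. x \<in> S \<Longrightarrow> f x \<in> \<int>"
  shows "f constant_on S"
proof (rule continuous_discrete_range_constant[OF assms(1,2)])
  fix x assume x: "x \<in> S"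
  show "\<exists>e>0. \<forall>y. y \<in> S \<and> f y \<noteq> f x \<longrightarrow> e \<le> norm (f y - f x)"
  proof (intro exI[of _ 1] conjI allI impI)
    fix y assume y: "y \<in> S \<and> f y \<noteq> f x"
    then obtain m n where "f y = of_int m" "f x = of_int n" using assms(3) x by (meson Ints_cases)
    then show "1 \<le> norm (f y - f x)" using y by simp linarith
  qed simp
qed

lemma time_map_identity_imp_rotation_quantized:
  assumes "time_map_identity a R T" "T \<ge> 0"
    and a_nz: "\<And>r. r \<in> {0<..<R} \<Longrightarrow> a r \<noteq> 0"
    and K_deriv: "\<And>r. r \<in> {0<..<R} \<Longrightarrow> (gauss_curv a has_real_derivative K' r) (at r)"
    and "r \<in> {0<..<R}"
  shows "T * (K' r / a r) / (2 * pi) \<in> \<int>"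
proof -
  obtain X where X: "is_hamiltonian_vf (area_form a) (mid_region R) (\<lambda>p. gauss_curv a (fst p)) X"
    and periodic: "\<forall>p \<in> mid_region R. \<exists>\<gamma> :: real \<Rightarrow> real \<times> real. \<gamma> 0 = p \<and>
        (\<forall>t\<in>{0..T}. \<gamma> t \<in> mid_region R \<and> (\<gamma> has_vector_derivative X (\<gamma> t)) (at t within {0..T})) \<and>
        fst (\<gamma> T) = fst p \<and> (\<exists>k::int. snd (\<gamma> T) = snd p + 2 * pi * of_int k)"
    using assms(1) unfolding time_map_identity_def by blast
  have X_eq: "X q = (0, K' (fst q) / a (fst q))" if "q \<in> mid_region R" for q
    using hamiltonian_vf_of_radial_function[OF X] that K_deriv a_nz by (auto simp: mid_region_def)
  have "(r, 0) \<in> mid_region R"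
    using assms(5) by (simp add: mid_region_def)
  then obtain \<gamma> k where "\<gamma> 0 = (r, 0)" "snd (\<gamma> T) = 2 * pi * of_int k"
    and \<gamma>: "\<And>t. t \<in> {0..T} \<Longrightarrow> \<gamma> t \<in> mid_region R \<and> (\<gamma> has_vector_derivative X (\<gamma> t)) (at t within {0..T})"
    using periodic by fastforce
  moreover have "\<gamma> T = (fst (\<gamma> 0), snd (\<gamma> 0) + T * (K' (fst (\<gamma> 0)) / a (fst (\<gamma> 0))))"
    using flow_of_rotation_field[OF \<open>T \<ge> 0\<close> X_eq \<gamma>] by simp
  ultimately have "T * (K' r / a r) = 2 * pi * of_int k"
    by simp
  then show ?thesis
    by simp
qed

theorem theorem5p1:
  fixes a :: "real \<Rightarrow> real" and R :: real
  assumes "R > 0"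
    and "continuous_on {0..R} a"
    and "\<forall>r\<in>{0..R}. a r \<ge> 0"
    and "\<forall>r\<in>{0<..<R}. a r > 0"
    and "smooth1_on {0<..<R} a"
    and "pole_smooth R a"
    and "pole_smooth R (\<lambda>s. a (R - s))"
    and "\<not> (\<exists>c. \<forall>r\<in>{0<..<R}. gauss_curv a r = c)"
  shows "\<not> (\<exists>T>0. time_map_identity a R T)"
proof
  assume "\<exists>T>0. time_map_identity a R T"
  then obtain T where "T > 0" and T: "time_map_identity a R T"
    by blast
  define I where "I = {0<..<R}"
  have a_pos: "\<And>r. r \<in> I \<Longrightarrow> a r > 0"
    using assms(4) by (simp add: I_def)
  then have a_nz: "\<And>r. r \<in> I \<Longrightarrow> a r \<noteq> 0"
    by (metis less_irrefl)
  obtain a' K' where a_deriv: "\<And>r. r \<in> I \<Longrightarrow> (a has_real_derivative a' r) (at r)"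
    and a'_deriv: "\<And>r. r \<in> I \<Longrightarrow> (a' has_real_derivative - gauss_curv a r * a r) (at r)"
    and K_deriv: "\<And>r. r \<in> I \<Longrightarrow> (gauss_curv a has_real_derivative K' r) (at r)"
    and "continuous_on I K'"
    using smooth_profile_gauss_curv[OF assms(5)[folded I_def] _ a_nz] by (auto simp: I_def)
  have "(\<lambda>r. T * (K' r / a r) / (2 * pi)) constant_on I"
  proof (rule continuous_on_Ints_valued_constant)
    show "continuous_on I (\<lambda>r. T * (K' r / a r) / (2 * pi))"
      using \<open>continuous_on I K'\<close> a_nz
      by (intro continuous_intros smooth1_on_continuous_on[OF assms(5)[folded I_def]]) (auto simp: I_def)
  qed (use time_map_identity_imp_rotation_quantized[OF T] \<open>T > 0\<close> a_nz K_deriv in \<open>auto simp: I_def\<close>)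
  then obtain m where "\<And>r. r \<in> I \<Longrightarrow> T * (K' r / a r) / (2 * pi) = m"
    unfolding constant_on_def by blast
  then have K'_eq: "K' r = (2 * pi * m / T) * a r" if "r \<in> I" for r
    using that a_nz[OF that] \<open>T > 0\<close> by (fastforce simp: field_simps)
  have "2 * pi * m / T = 0"
  proof (rule curvature_gradient_proportional_imp_zero[OF \<open>R > 0\<close>])
    show "(a \<longlongrightarrow> 0) (at_right 0)" "(a' \<longlongrightarrow> 1) (at_right 0)"
      using pole_smooth_tendsto[OF assms(6)] a_pos a_deriv unfolding I_def by auto
    show "(a \<longlongrightarrow> 0) (at_left R)" "(a' \<longlongrightarrow> - 1) (at_left R)"
      using pole_smooth_reflected_tendsto[OF assms(7)] a_pos a_deriv unfolding I_def by auto
  qed (use a_deriv a'_deriv K_deriv K'_eq in \<open>auto simp: I_def\<close>)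
  then have "\<exists>k. \<forall>r\<in>I. gauss_curv a r = k"
    using K_deriv K'_eq
    by (intro has_field_derivative_zero_constant) (auto simp: I_def intro: has_field_derivative_at_within)
  with assms(8) show False
    unfolding I_def by blast
qed

end
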